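(* Let $\underline q>0$, let $\theta^*\in\Theta(\underline q)$, and let the fixed initial distribution $\mu$ satisfy $\mu_i\ge\underline q$ for all $i$. If (A1) holds, then for every $\epsilon\in(0,1)$ for which $\Theta_\epsilon$ is defined in (A1), there exists $N\in\mathbb N$ such that for all $n\ge N$ and all $\theta\in\Theta_\epsilon$, $$\frac1n\,KL\big(P_n^{\theta^*},P_n^{\theta,\mu}\big)\le\frac{3}{\underline q}\,\epsilon,$$ where $P_n^{\theta,\mu}=p_n^{\theta,\mu}\lambda^{\otimes n}$ is the law of $Y_{1:n}$ under $\mathbb P^{\theta,\mu}$ and $KL(P_1,P_2)=\int p_1\log(p_1/p_2)$ if $P_1\ll P_2$, $+\infty$ otherwise.
   Context: Fix integers $k\ge1$, $d\ge1$. $\lambda$ is a $\sigma$-finite reference measure on $\mathbb R^d$ (Borel $\sigma$-field) and $\mathcal F$ is the set of probability densities with respect to $\lambda$. $\Delta_k=\{x\in[0,\infty)^k:\sum_i x_i=1\}$; a transition matrix is an element $Q\in\Delta_k^k$ (each row lies in $\Delta_k$). For $\underline q\ge0$, $\Delta^k(\underline q)=\{Q\in\Delta_k^k:\min_{i,j}Q_{i,j}\ge\underline q\}$, $\Theta=\Delta_k^k\times\mathcal F^k$ and $\Theta(\underline q)=\Delta^k(\underline q)\times\mathcal F^k$. For $\underline q>0$ and $Q\in\Delta^k(\underline q)$, $\mu^Q$ denotes the unique stationary distribution of $Q$. For $\theta=(Q,f)$, $f=(f_1,\dots,f_k)\in\mathcal F^k$, and an initial distribution $\nu\in\Delta_k$,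 $\mathbb P^{\theta,\nu}$ is the law of the hidden Markov model $(X_t,Y_t)_{t\ge1}$: $(X_t)$ is a Markov chain on $\{1,\dots,k\}$ with initial law $\nu$ and transition matrix $Q$, and conditionally on $(X_t)_t$ the variables $Y_t\in\mathbb R^d$ are independent, $Y_t$ having density $f_{X_t}$ with respect to $\lambda$. $\mathbb P^\theta:=\mathbb P^{\theta,\mu^Q}$. The density of $Y_{1:l}$ with respect to $\lambda^{\otimes l}$ is $p_l^{\theta,\nu}(y_{1:l})=\sum_{x_1,\dots,x_l=1}^k\nu_{x_1}Q_{x_1,x_2}\cdots Q_{x_{l-1},x_l}f_{x_1}(y_1)\cdots f_{x_l}(y_l)$; $p_l^\theta:=p_l^{\theta,\mu^Q}$, $P_l^\theta:=p_l^\theta\lambda^{\otimes l}$. The prior is $\pi=\pi_Q\otimes\pi_f$ on $\Theta$ with a fixed initial distribution $\mu\in\Delta_k$. $\theta^*=(Q^*,f^* )$ is the true parameter. $\|M\|=\max_{i,j}|M_{i,j}|$. Assumption (A1) (for given $\underline q>0$): there is $\epsilon_0>0$ such that for every $\epsilon\in(0,\epsilon_0)$ there is a set $\Theta_\epsilon\subset\Theta(\underline q)$ with $\pi(\Theta_\epsilon)>0$ such that every $\theta=(Q,f)\in\Theta_\epsilon$ satisfies: (A1a) $\|Q-Q^*\|<\epsilon$; (A1b) $\max_{1\le i\le k}\int f_i^*(y)\max_{1\le j\le k}\log\big(f_j^*(y)/f_j(y)\big)\lambda(dy)<\epsilon$; (A1c) for all $y$ with $\sum_i f_i^*(y)>0$,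 $\sum_j f_j(y)>0$; (A1d) $\sup_{y:\sum_i f_i^*(y)>0}\max_j f_j(y)<\infty$; (A1e) $\sum_{i=1}^k\int f_i^*(y)\,\big|\log\big(\sum_{j=1}^k f_j(y)\big)\big|\lambda(dy)<\infty$. *)

theory Defs
  imports "HOL-Probability.Probability"
begin

definition distr_on :: "nat \<Rightarrow> (nat \<Rightarrow> real) \<Rightarrow> bool" where
  "distr_on k m \<longleftrightarrow> (\<forall>i<k. 0 \<le> m i) \<and> (\<Sum>i<k. m i) = 1"

definition trans_mat :: "nat \<Rightarrow> (nat \<Rightarrow> nat \<Rightarrow> real) \<Rightarrow> bool" where
  "trans_mat k Q \<longleftrightarrow> (\<forall>i<k. distr_on k (Q i))"

definition Delta_q :: "nat \<Rightarrow> real \<Rightarrow> (nat \<Rightarrow> nat \<Rightarrow> real) \<Rightarrow> bool" where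
  "Delta_q k q Q \<longleftrightarrow> trans_mat k Q \<and> (\<forall>i<k. \<forall>j<k. q \<le> Q i j)"

definition is_density :: "'a measure \<Rightarrow> ('a \<Rightarrow> real) \<Rightarrow> bool" where
  "is_density lam g \<longleftrightarrow> g \<in> borel_measurable lam \<and> (\<forall>y. 0 \<le> g y)
     \<and> (\<integral>\<^sup>+ y. ennreal (g y) \<partial>lam) = 1"

type_synonym 'a param = "(nat \<Rightarrow> nat \<Rightarrow> real) \<times> (nat \<Rightarrow> 'a \<Rightarrow> real)"

definition Theta_q :: "nat \<Rightarrow> real \<Rightarrow> 'a measure \<Rightarrow> 'a param set" where
  "Theta_q k q lam = {(Q, f). Delta_q k q Q \<and> (\<forall>i<k. is_density lam (f i))}"

text \<open>the (unique, for q>0) stationary distribution of Q, extended by 0 outside 0..k-1\<close>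
definition stat_dist :: "nat \<Rightarrow> (nat \<Rightarrow> nat \<Rightarrow> real) \<Rightarrow> (nat \<Rightarrow> real)" where
  "stat_dist k Q = (THE m. distr_on k m \<and> (\<forall>i\<ge>k. m i = 0)
        \<and> (\<forall>j<k. (\<Sum>i<k. m i * Q i j) = m j))"

text \<open>density of Y_{1:n} (indexed 0..n-1) under initial law nu, w.r.t. lam^n\<close>
definition hmm_dens :: "nat \<Rightarrow> nat \<Rightarrow> (nat \<Rightarrow> real) \<Rightarrow> 'a param \<Rightarrow> (nat \<Rightarrow> 'a) \<Rightarrow> real" where
  "hmm_dens k n nu \<theta> y = (if n = 0 then 1 else
     (\<Sum>x\<in>{0..<n} \<rightarrow>\<^sub>E {0..<k}. nu (x 0)
        * (\<Prod>t\<in>{0..<n-1}. fst \<theta> (x t) (x (Suc t)))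
        * (\<Prod>t\<in>{0..<n}. snd \<theta> (x t) (y t))))"

definition prod_ref :: "'a measure \<Rightarrow> nat \<Rightarrow> (nat \<Rightarrow> 'a) measure" where
  "prod_ref lam n = PiM {0..<n} (\<lambda>_. lam)"

definition eint :: "'b measure \<Rightarrow> ('b \<Rightarrow> ereal) \<Rightarrow> ereal" where
  "eint M g = enn2ereal (\<integral>\<^sup>+ x. e2ennreal (g x) \<partial>M) - enn2ereal (\<integral>\<^sup>+ x. e2ennreal (- g x) \<partial>M)"

definition KL_dens :: "'b measure \<Rightarrow> ('b \<Rightarrow> real) \<Rightarrow> ('b \<Rightarrow> real) \<Rightarrow> ereal" where
  "KL_dens M p1 p2 =
    (if absolutely_continuous (density M (\<lambda>y. ennreal (p2 y))) (density M (\<lambda>y. ennreal (p1 y)))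
     then eint M (\<lambda>y. if p1 y = 0 then 0 else ereal (p1 y * ln (p1 y / p2 y)))
     else \<infinity>)"

text \<open>extended log ratio log(a/b) for a,b >= 0: log(a/0)=+inf for a>0, log(0/b)=-inf;
  the undetermined case 0/0 is taken as -inf (the term is ignored in the max)\<close>
definition elogratio :: "real \<Rightarrow> real \<Rightarrow> ereal" where
  "elogratio a b = (if 0 < a \<and> 0 < b then ereal (ln (a / b))
                    else if 0 < a then \<infinity> else -\<infinity>)"

definition mat_norm :: "nat \<Rightarrow> (nat \<Rightarrow> nat \<Rightarrow> real) \<Rightarrow> real" where
  "mat_norm k M = Max {\<bar>M i j\<bar> | i j. i < k \<and> j < k}"

text \<open>Conditions (A1a)-(A1e) for theta = (Q,f) relative to theta* = (Qs,fs)\<close>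
definition A1_conds :: "nat \<Rightarrow> 'a measure \<Rightarrow> 'a param \<Rightarrow> real \<Rightarrow> 'a param \<Rightarrow> bool" where
  "A1_conds k lam \<theta>s \<epsilon> \<theta> \<longleftrightarrow>
     (let Qs = fst \<theta>s; fs = snd \<theta>s; Q = fst \<theta>; f = snd \<theta> in
       mat_norm k (\<lambda>i j. Q i j - Qs i j) < \<epsilon>
     \<and> Max ((\<lambda>i. eint lam (\<lambda>y. ereal (fs i y) * Max ((\<lambda>j. elogratio (fs j y) (f j y)) ` {0..<k})))
             ` {0..<k}) < ereal \<epsilon>
     \<and> (\<forall>y. (\<Sum>i<k. fs i y) > 0 \<longrightarrow> (\<Sum>j<k. f j y) > 0)
     \<and> (\<exists>B. \<forall>y. (\<Sum>i<k. fs i y) > 0 \<longrightarrow> (\<forall>j<k. f j y \<le> B))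
     \<and> (\<Sum>i<k. \<integral>\<^sup>+ y. ennreal (fs i y * \<bar>ln (\<Sum>j<k. f j y)\<bar>) \<partial>lam) < \<infinity>)"

end

theory Submission
  imports Defs
begin

text \<open>The densities of \<open>Y\<^sub>1\<^sub>:\<^sub>n\<close> under \<open>\<theta>*\<close> and under \<open>\<theta>\<close> are mixtures, over the \<open>k\<^sup>n\<close> hidden
  paths, of a path weight times a product of emission densities. Under (A1) every path weight of
  \<open>\<theta>*\<close> (started in its stationary law) is at most \<open>(1/q) (1 + \<epsilon>/q)\<^sup>n\<^sup>-\<^sup>1\<close> times the corresponding
  weight of \<open>\<theta>\<close> (started in \<open>\<mu> \<ge> q\<close>), and every emission product is at most \<open>\<Prod>\<^sub>t exp D(y\<^sub>t)\<close> times
  the other, where \<open>D = max\<^sub>j log (f*\<^sub>j / f\<^sub>j)\<close>. Hence pointwise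
  \<open>log (p*/p) \<le> log (1/q) + (n-1) \<epsilon>/q + \<Sum>\<^sub>t D(y\<^sub>t)\<close>. Integrating against \<open>p*\<close>, each \<open>D(y\<^sub>t)\<close>
  contributes the integral of \<open>D\<close> against a convex combination of the \<open>f*\<^sub>i\<close>, which is below \<open>\<epsilon>\<close>
  by (A1b); so the KL divergence is at most \<open>log (1/q) + (n-1) \<epsilon>/q + n \<epsilon> \<le> 3 n \<epsilon>/q\<close> as soon
  as \<open>n \<epsilon> \<ge> log (1/q)\<close>.\<close>

section \<open>The stationary distribution\<close>

definition is_stationary :: "nat \<Rightarrow> (nat \<Rightarrow> nat \<Rightarrow> real) \<Rightarrow> (nat \<Rightarrow> real) \<Rightarrow> bool" where
  "is_stationary k Q m \<longleftrightarrow>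
     distr_on k m \<and> (\<forall>i\<ge>k. m i = 0) \<and> (\<forall>j<k. (\<Sum>i<k. m i * Q i j) = m j)"

lemma Delta_q_nonneg: "Delta_q k q Q \<Longrightarrow> i < k \<Longrightarrow> j < k \<Longrightarrow> 0 \<le> Q i j"
  unfolding Delta_q_def trans_mat_def distr_on_def by auto

lemma Delta_q_row_sum: "Delta_q k q Q \<Longrightarrow> i < k \<Longrightarrow> (\<Sum>j<k. Q i j) = 1"
  unfolding Delta_q_def trans_mat_def distr_on_def by auto

lemma Delta_q_card_mult_le_1:
  assumes D: "Delta_q k q Q" and k: "k \<ge> 1"
  shows "real k * q \<le> 1"
proof -
  have "(\<Sum>j<k. q) \<le> (\<Sum>j<k. Q 0 j)" using D k unfolding Delta_q_def by (intro sum_mono) auto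
  then show ?thesis using Delta_q_row_sum[OF D, of 0] k by simp
qed

lemma Delta_q_le_1: "Delta_q k q Q \<Longrightarrow> k \<ge> 1 \<Longrightarrow> q \<le> 1"
  using Delta_q_card_mult_le_1[of k q Q] mult_right_mono[of 1 "real k" q]
  by (cases "q \<ge> 0") auto

text \<open>Doeblin's argument: subtracting the minorisation \<open>q\<close> from every entry is harmless on
  zero-sum vectors, and leaves a nonnegative matrix with row sums \<open>1 - k q\<close>.\<close>

lemma Delta_q_contraction:
  assumes D: "Delta_q k q Q" and d: "(\<Sum>i<k. d i) = 0"
  shows "(\<Sum>j<k. \<bar>\<Sum>i<k. d i * Q i j\<bar>) \<le> (1 - real k * q) * (\<Sum>i<k. \<bar>d i\<bar>)"
proof -
  have Qq: "\<forall>i<k. \<forall>j<k. q \<le> Q i j" using D unfolding Delta_q_def by auto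
  have "(\<Sum>j<k. \<bar>\<Sum>i<k. d i * Q i j\<bar>) = (\<Sum>j<k. \<bar>\<Sum>i<k. d i * (Q i j - q)\<bar>)"
  proof (rule sum.cong[OF refl])
    fix j
    have "(\<Sum>i<k. d i * (Q i j - q)) = (\<Sum>i<k. d i * Q i j) - q * (\<Sum>i<k. d i)"
      by (simp add: algebra_simps sum_subtractf sum_distrib_left)
    then show "\<bar>\<Sum>i<k. d i * Q i j\<bar> = \<bar>\<Sum>i<k. d i * (Q i j - q)\<bar>" using d by simp
  qed
  also have "\<dots> \<le> (\<Sum>j<k. \<Sum>i<k. \<bar>d i\<bar> * (Q i j - q))"
  proof (rule sum_mono)
    fix j assume j: "j \<in> {..<k}"
    have "\<bar>\<Sum>i<k. d i * (Q i j - q)\<bar> \<le> (\<Sum>i<k. \<bar>d i * (Q i j - q)\<bar>)" by (rule sum_abs)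
    also have "\<dots> = (\<Sum>i<k. \<bar>d i\<bar> * (Q i j - q))"
      using Qq j by (intro sum.cong) (auto simp: abs_mult)
    finally show "\<bar>\<Sum>i<k. d i * (Q i j - q)\<bar> \<le> (\<Sum>i<k. \<bar>d i\<bar> * (Q i j - q))" .
  qed
  also have "\<dots> = (\<Sum>i<k. \<bar>d i\<bar> * ((\<Sum>j<k. Q i j) - real k * q))"
    by (subst sum.swap) (simp add: sum_distrib_left[symmetric] sum_subtractf)
  also have "\<dots> = (1 - real k * q) * (\<Sum>i<k. \<bar>d i\<bar>)"
    using Delta_q_row_sum[OF D] by (simp add: sum_distrib_left mult.commute)
  finally show ?thesis .
qed

lemma stationary_unique:
  assumes D: "Delta_q k q Q" and k: "k \<ge> 1" and q: "q > 0"
    and m1: "is_stationary k Q m1" and m2: "is_stationary k Q m2"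
  shows "m1 = m2"
proof -
  define d where "d i = m1 i - m2 i" for i
  have "(\<Sum>i<k. d i) = 0"
    using m1 m2 unfolding d_def is_stationary_def distr_on_def by (simp add: sum_subtractf)
  note contr = Delta_q_contraction[OF D this]
  have "(\<Sum>j<k. \<bar>\<Sum>i<k. d i * Q i j\<bar>) = (\<Sum>j<k. \<bar>d j\<bar>)"
    using m1 m2 unfolding d_def is_stationary_def
    by (intro sum.cong) (auto simp: left_diff_distrib sum_subtractf)
  then have "real k * q * (\<Sum>j<k. \<bar>d j\<bar>) \<le> 0" using contr by (simp add: algebra_simps)
  moreover have "0 < real k * q" using k q by simp
  ultimately have "(\<Sum>j<k. \<bar>d j\<bar>) \<le> 0" using mult_le_cancel_left_pos[of "real k * q" "\<Sum>j<k. \<bar>d j\<bar>" 0] by simp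
  then have "(\<Sum>j<k. \<bar>d j\<bar>) = 0" by (intro antisym sum_nonneg) auto
  then have "\<forall>j<k. d j = 0" by (subst (asm) sum_nonneg_eq_0_iff) auto
  then show ?thesis
    using m1 m2 unfolding d_def is_stationary_def by (intro ext) (metis eq_iff_diff_eq_0 not_le)
qed

primrec dist_iter :: "nat \<Rightarrow> (nat \<Rightarrow> nat \<Rightarrow> real) \<Rightarrow> nat \<Rightarrow> nat \<Rightarrow> real" where
  "dist_iter k Q 0 = (\<lambda>i. if i = 0 then 1 else 0)"
| "dist_iter k Q (Suc N) = (\<lambda>j. if j < k then (\<Sum>i<k. dist_iter k Q N i * Q i j) else 0)"

lemma dist_iter_distr:
  assumes D: "Delta_q k q Q" and k: "k \<ge> 1"
  shows "distr_on k (dist_iter k Q N) \<and> (\<forall>i\<ge>k. dist_iter k Q N i = 0)"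
proof (induction N)
  case 0
  have "(\<Sum>i<k. (if i = 0 then 1 else 0::real)) = 1" using k by (simp add: sum.delta)
  then show ?case using k by (auto simp: distr_on_def)
next
  case (Suc N)
  have "(\<Sum>j<k. \<Sum>i<k. dist_iter k Q N i * Q i j) = (\<Sum>i<k. dist_iter k Q N i * (\<Sum>j<k. Q i j))"
    by (subst sum.swap) (simp add: sum_distrib_left)
  also have "\<dots> = 1" using Suc Delta_q_row_sum[OF D] by (simp add: distr_on_def)
  moreover have "\<forall>j<k. 0 \<le> (\<Sum>i<k. dist_iter k Q N i * Q i j)"
    using Suc Delta_q_nonneg[OF D] unfolding distr_on_def by (auto intro!: sum_nonneg)
  ultimately show ?case unfolding distr_on_def by auto
qed

lemma dist_iter_increment_le:
  assumes D: "Delta_q k q Q" and k: "k \<ge> 1"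
  shows "(\<Sum>i<k. \<bar>dist_iter k Q (Suc N) i - dist_iter k Q N i\<bar>) \<le> 2 * (1 - real k * q) ^ N"
proof (induction N)
  case 0
  let ?v = "dist_iter k Q"
  have "(\<Sum>i<k. \<bar>?v 1 i - ?v 0 i\<bar>) \<le> (\<Sum>i<k. ?v 1 i + ?v 0 i)"
    using dist_iter_distr[OF D k, of 0] dist_iter_distr[OF D k, of 1]
    by (intro sum_mono) (auto simp: distr_on_def)
  also have "\<dots> = 2"
    using dist_iter_distr[OF D k, of 0] dist_iter_distr[OF D k, of 1]
    by (simp add: sum.distrib distr_on_def)
  finally show ?case by simp
next
  case (Suc N)
  let ?v = "dist_iter k Q"
  have "(\<Sum>i<k. ?v (Suc N) i - ?v N i) = 0"
    using dist_iter_distr[OF D k, of N] dist_iter_distr[OF D k, of "Suc N"]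
    by (simp add: sum_subtractf distr_on_def)
  note contr = Delta_q_contraction[OF D this]
  have "(\<Sum>i<k. \<bar>?v (Suc (Suc N)) i - ?v (Suc N) i\<bar>)
      = (\<Sum>j<k. \<bar>\<Sum>i<k. (?v (Suc N) i - ?v N i) * Q i j\<bar>)"
    by (intro sum.cong) (auto simp: left_diff_distrib sum_subtractf)
  also have "\<dots> \<le> (1 - real k * q) * (2 * (1 - real k * q) ^ N)"
    using contr Suc Delta_q_card_mult_le_1[OF D k]
    by (meson diff_ge_0_iff_ge mult_left_mono order_trans)
  finally show ?case by simp
qed

lemma stationary_exists:
  assumes D: "Delta_q k q Q" and k: "k \<ge> 1" and q: "q > 0"
  shows "\<exists>m. is_stationary k Q m"
proof -
  define r where "r = 1 - real k * q"
  have r: "0 \<le> r" "r < 1" using Delta_q_card_mult_le_1[OF D k] q k unfolding r_def by auto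
  define v where "v = dist_iter k Q"
  have vd: "distr_on k (v N) \<and> (\<forall>i\<ge>k. v N i = 0)" for N
    unfolding v_def using dist_iter_distr[OF D k] by blast
  have conv: "convergent (\<lambda>N. v N j)" for j
  proof (cases "j < k")
    case False then show ?thesis using vd by (simp add: convergent_const)
  next
    case True
    have bound: "norm (v (Suc N) j - v N j) \<le> 2 * r ^ N" for N
      using member_le_sum[of j "{..<k}" "\<lambda>i. \<bar>v (Suc N) i - v N i\<bar>"] True
        dist_iter_increment_le[OF D k, of N] unfolding v_def r_def by simp
    have "summable (\<lambda>N. 2 * r ^ N)" using r by (intro summable_mult summable_geometric) auto
    then have "summable (\<lambda>N. v (Suc N) j - v N j)"
      by (rule summable_comparison_test[rotated]) (use bound in blast)
    then have "(\<lambda>N. v 0 j + (\<Sum>L<N. v (Suc L) j - v L j))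
        \<longlonglongrightarrow> v 0 j + (\<Sum>N. v (Suc N) j - v N j)"
      by (intro tendsto_add tendsto_const summable_LIMSEQ)
    moreover have "v 0 j + (\<Sum>L<N. v (Suc L) j - v L j) = v N j" for N
      by (induction N) auto
    ultimately show ?thesis unfolding convergent_def by auto
  qed
  define m where "m j = lim (\<lambda>N. v N j)" for j
  have lm: "(\<lambda>N. v N j) \<longlonglongrightarrow> m j" for j
    using conv[of j] unfolding m_def by (simp add: convergent_LIMSEQ_iff)
  have "is_stationary k Q m" unfolding is_stationary_def
  proof (intro conjI allI impI)
    show "m i = 0" if "k \<le> i" for i
      using lm[of i] vd that by (simp add: LIMSEQ_const_iff)
    have "\<forall>i<k. 0 \<le> m i"
      using vd by (auto intro!: LIMSEQ_le_const[OF lm] simp: distr_on_def)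
    moreover have "(\<lambda>N. \<Sum>i<k. v N i) \<longlonglongrightarrow> (\<Sum>i<k. m i)" by (intro tendsto_sum lm)
    then have "(\<Sum>i<k. m i) = 1" using vd by (simp add: distr_on_def LIMSEQ_const_iff)
    ultimately show "distr_on k m" unfolding distr_on_def by auto
    fix j assume j: "j < k"
    have "(\<lambda>N. \<Sum>i<k. v N i * Q i j) \<longlonglongrightarrow> (\<Sum>i<k. m i * Q i j)"
      by (intro tendsto_sum tendsto_mult lm tendsto_const)
    moreover have "(\<lambda>N. \<Sum>i<k. v N i * Q i j) = (\<lambda>N. v (Suc N) j)" using j unfolding v_def by auto
    moreover have "(\<lambda>N. v (Suc N) j) \<longlonglongrightarrow> m j" using lm[of j] by (rule LIMSEQ_Suc)
    ultimately show "(\<Sum>i<k. m i * Q i j) = m j" using LIMSEQ_unique by metis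
  qed
  then show ?thesis by blast
qed

lemma stat_dist_distr:
  assumes "Delta_q k q Q" "k \<ge> 1" "q > 0"
  shows "distr_on k (stat_dist k Q)"
proof -
  have "\<exists>!m. is_stationary k Q m"
    using stationary_exists[OF assms] stationary_unique[OF assms] by blast
  from theI'[OF this] show ?thesis unfolding stat_dist_def is_stationary_def by blast
qed

section \<open>Sums over hidden paths\<close>

lemma sum_PiE_Suc:
  fixes K :: "nat set"
  shows "(\<Sum>x\<in>{0..<Suc n} \<rightarrow>\<^sub>E K. F x) = (\<Sum>g\<in>{0..<n} \<rightarrow>\<^sub>E K. \<Sum>y\<in>K. F (g(n:=y)))"
proof -
  have e: "{0..<Suc n} \<rightarrow>\<^sub>E K = (\<lambda>(y,g). g(n:=y)) ` (K \<times> ({0..<n} \<rightarrow>\<^sub>E K))"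
    using PiE_insert_eq[of n "{0..<n}" "\<lambda>_. K"] by (simp add: atLeast0_lessThan_Suc)
  have inj: "inj_on (\<lambda>(y,g). g(n:=y)) (K \<times> ({0..<n} \<rightarrow>\<^sub>E K))"
  proof (rule inj_onI, clarsimp)
    fix y g y' g' assume g: "g \<in> {0..<n} \<rightarrow>\<^sub>E K" and g': "g' \<in> {0..<n} \<rightarrow>\<^sub>E K"
      and eq: "g(n := y) = g'(n := y')"
    have "y = y'" using fun_cong[OF eq, of n] by simp
    moreover have "g = g'"
    proof
      fix i show "g i = g' i"
      proof (cases "i = n")
        case True then show ?thesis using g g' by (simp add: PiE_def extensional_def)
      next
        case False then show ?thesis using fun_cong[OF eq, of i] by simp
      qed
    qed
    ultimately show "y = y' \<and> g = g'" by simp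
  qed
  have "(\<Sum>x\<in>{0..<Suc n} \<rightarrow>\<^sub>E K. F x) = (\<Sum>p\<in>K \<times> ({0..<n} \<rightarrow>\<^sub>E K). F ((\<lambda>(y,g). g(n:=y)) p))"
    unfolding e by (rule sum.reindex[OF inj, unfolded comp_def])
  also have "\<dots> = (\<Sum>y\<in>K. \<Sum>g\<in>{0..<n} \<rightarrow>\<^sub>E K. F (g(n:=y)))"
    by (simp add: sum.cartesian_product split_beta)
  also have "\<dots> = (\<Sum>g\<in>{0..<n} \<rightarrow>\<^sub>E K. \<Sum>y\<in>K. F (g(n:=y)))" by (rule sum.swap)
  finally show ?thesis .
qed

lemma sum_path_weights_eq_1:
  fixes K :: "nat set"
  assumes nu: "(\<Sum>j\<in>K. \<nu> j) = 1" and Q: "\<forall>i\<in>K. (\<Sum>j\<in>K. Q i j) = 1"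
  shows "(\<Sum>x\<in>{0..<Suc n} \<rightarrow>\<^sub>E K. \<nu> (x 0) * (\<Prod>t\<in>{0..<n}. Q (x t) (x (Suc t)))) = (1::real)"
proof (induction n)
  case 0
  show ?case using nu by (subst sum_PiE_Suc) simp
next
  case (Suc n)
  have "(\<Sum>x\<in>{0..<Suc (Suc n)} \<rightarrow>\<^sub>E K. \<nu> (x 0) * (\<Prod>t\<in>{0..<Suc n}. Q (x t) (x (Suc t))))
     = (\<Sum>g\<in>{0..<Suc n} \<rightarrow>\<^sub>E K. \<Sum>y\<in>K. \<nu> (g 0) * (\<Prod>t\<in>{0..<n}. Q (g t) (g (Suc t))) * Q (g n) y)"
    by (subst sum_PiE_Suc) (intro sum.cong refl, simp add: atLeast0_lessThan_Suc mult.commute mult.left_commute)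
  also have "\<dots> = (\<Sum>g\<in>{0..<Suc n} \<rightarrow>\<^sub>E K. \<nu> (g 0) * (\<Prod>t\<in>{0..<n}. Q (g t) (g (Suc t))))"
  proof (intro sum.cong refl)
    fix g assume "g \<in> {0..<Suc n} \<rightarrow>\<^sub>E K"
    then have "g n \<in> K" by auto
    then show "(\<Sum>y\<in>K. \<nu> (g 0) * (\<Prod>t\<in>{0..<n}. Q (g t) (g (Suc t))) * Q (g n) y)
        = \<nu> (g 0) * (\<Prod>t\<in>{0..<n}. Q (g t) (g (Suc t)))"
      using Q by (simp add: sum_distrib_left[symmetric])
  qed
  finally show ?case using Suc by simp
qed

lemma nn_integral_PiM_product_density:
  assumes lam: "sigma_finite_measure lam" and I: "finite I" "t \<in> I"
    and dens: "\<forall>s\<in>I. is_density lam (\<phi> s)" and F: "F \<in> borel_measurable lam"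
  shows "(\<integral>\<^sup>+y. (\<Prod>s\<in>I. ennreal (\<phi> s (y s))) * F (y t) \<partial>PiM I (\<lambda>_. lam))
       = (\<integral>\<^sup>+z. ennreal (\<phi> t z) * F z \<partial>lam)"
proof -
  interpret product_sigma_finite "\<lambda>_. lam" by (simp add: product_sigma_finite_def lam)
  define H where "H s = (if s = t then (\<lambda>z. ennreal (\<phi> t z) * F z) else (\<lambda>z. ennreal (\<phi> s z)))" for s
  have Hm: "H s \<in> borel_measurable lam" if "s \<in> I" for s
    using dens that F unfolding H_def is_density_def by auto
  have "(\<lambda>y. (\<Prod>s\<in>I. ennreal (\<phi> s (y s))) * F (y t)) = (\<lambda>y. \<Prod>s\<in>I. H s (y s))"
  proof
    fix y
    have "(\<Prod>s\<in>I. H s (y s)) = H t (y t) * (\<Prod>s\<in>I-{t}. H s (y s))" using I by (simp add: prod.remove)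
    also have "(\<Prod>s\<in>I-{t}. H s (y s)) = (\<Prod>s\<in>I-{t}. ennreal (\<phi> s (y s)))"
      unfolding H_def by (intro prod.cong) auto
    also have "(\<Prod>s\<in>I. ennreal (\<phi> s (y s))) = ennreal (\<phi> t (y t)) * (\<Prod>s\<in>I-{t}. ennreal (\<phi> s (y s)))"
      using I by (simp add: prod.remove)
    ultimately show "(\<Prod>s\<in>I. ennreal (\<phi> s (y s))) * F (y t) = (\<Prod>s\<in>I. H s (y s))"
      unfolding H_def by (simp add: mult_ac)
  qed
  then have "(\<integral>\<^sup>+y. (\<Prod>s\<in>I. ennreal (\<phi> s (y s))) * F (y t) \<partial>PiM I (\<lambda>_. lam))
      = (\<Prod>s\<in>I. integral\<^sup>N lam (H s))"
    using product_nn_integral_prod[OF I(1) Hm] by simp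
  also have "\<dots> = integral\<^sup>N lam (H t) * (\<Prod>s\<in>I-{t}. integral\<^sup>N lam (H s))" using I by (simp add: prod.remove)
  also have "(\<Prod>s\<in>I-{t}. integral\<^sup>N lam (H s)) = 1"
    using dens unfolding H_def is_density_def by (intro prod.neutral) auto
  finally show ?thesis unfolding H_def by simp
qed

lemma measurable_PiM_prod_component:
  fixes n :: nat
  assumes "\<forall>s<n. \<phi> s \<in> borel_measurable lam" "F \<in> borel_measurable lam" "t < n"
  shows "(\<lambda>y. (\<Prod>s\<in>{0..<n}. ennreal (\<phi> s (y s))) * F (y t)) \<in> borel_measurable (PiM {0..<n} (\<lambda>_. lam))"
proof -
  have comp: "(\<lambda>y. g (y s)) \<in> borel_measurable (PiM {0..<n} (\<lambda>_. lam))"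
    if "g \<in> borel_measurable lam" "s < n" for g :: "_ \<Rightarrow> ennreal" and s :: nat
    using that by (intro measurable_compose[OF measurable_component_singleton]) auto
  have "(\<lambda>z. ennreal (\<phi> s z)) \<in> borel_measurable lam" if "s < n" for s
    using assms(1) that by (intro measurable_compose[OF _ measurable_ennreal]) auto
  then show ?thesis
    using assms by (intro borel_measurable_times_ennreal borel_measurable_prod_ennreal comp) auto
qed

lemma nn_integral_PiM_mixture:
  fixes n :: nat
  assumes lam: "sigma_finite_measure lam" and P: "finite P" and t: "t < n"
    and dens: "\<forall>x\<in>P. \<forall>s<n. is_density lam (\<phi> x s)" and c: "\<forall>x\<in>P. 0 \<le> c x"
    and F: "F \<in> borel_measurable lam"
  shows "(\<integral>\<^sup>+y. ennreal (\<Sum>x\<in>P. c x * (\<Prod>s\<in>{0..<n}. \<phi> x s (y s))) * F (y t) \<partial>PiM {0..<n} (\<lambda>_. lam))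
       = (\<Sum>x\<in>P. ennreal (c x) * (\<integral>\<^sup>+z. ennreal (\<phi> x t z) * F z \<partial>lam))"
proof -
  have nn: "0 \<le> \<phi> x s z" and ms: "\<phi> x s \<in> borel_measurable lam" if "x \<in> P" "s < n" for x s z
    using dens that unfolding is_density_def by auto
  have "ennreal (\<Sum>x\<in>P. c x * (\<Prod>s\<in>{0..<n}. \<phi> x s (y s)))
      = (\<Sum>x\<in>P. ennreal (c x) * (\<Prod>s\<in>{0..<n}. ennreal (\<phi> x s (y s))))" for y
  proof -
    have "ennreal (\<Sum>x\<in>P. c x * (\<Prod>s\<in>{0..<n}. \<phi> x s (y s)))
        = (\<Sum>x\<in>P. ennreal (c x * (\<Prod>s\<in>{0..<n}. \<phi> x s (y s))))"
      using c nn by (intro sum_ennreal[symmetric] mult_nonneg_nonneg prod_nonneg) auto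
    also have "\<dots> = (\<Sum>x\<in>P. ennreal (c x) * (\<Prod>s\<in>{0..<n}. ennreal (\<phi> x s (y s))))"
    proof (intro sum.cong refl)
      fix x assume x: "x \<in> P"
      have "(\<Prod>s\<in>{0..<n}. ennreal (\<phi> x s (y s))) = ennreal (\<Prod>s\<in>{0..<n}. \<phi> x s (y s))"
        using nn x by (intro prod_ennreal) auto
      then show "ennreal (c x * (\<Prod>s\<in>{0..<n}. \<phi> x s (y s)))
          = ennreal (c x) * (\<Prod>s\<in>{0..<n}. ennreal (\<phi> x s (y s)))"
        using c x by (simp add: ennreal_mult')
    qed
    finally show ?thesis .
  qed
  then have "(\<integral>\<^sup>+y. ennreal (\<Sum>x\<in>P. c x * (\<Prod>s\<in>{0..<n}. \<phi> x s (y s))) * F (y t) \<partial>PiM {0..<n} (\<lambda>_. lam))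
      = (\<Sum>x\<in>P. \<integral>\<^sup>+y. ennreal (c x) * ((\<Prod>s\<in>{0..<n}. ennreal (\<phi> x s (y s))) * F (y t)) \<partial>PiM {0..<n} (\<lambda>_. lam))"
    using ms F t by (simp add: sum_distrib_right mult.assoc nn_integral_sum borel_measurable_times_ennreal
        measurable_PiM_prod_component)
  also have "\<dots> = (\<Sum>x\<in>P. ennreal (c x) * (\<integral>\<^sup>+z. ennreal (\<phi> x t z) * F z \<partial>lam))"
    using ms F t dens
    by (intro sum.cong refl) (simp add: nn_integral_cmult measurable_PiM_prod_component
        nn_integral_PiM_product_density[OF lam])
  finally show ?thesis .
qed

lemma e2ennreal_mult_ereal:
  assumes "0 \<le> a"
  shows "e2ennreal (ereal a * d) = ennreal a * e2ennreal d"
proof (cases "a = 0")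
  case True then show ?thesis by (simp add: zero_ereal_def[symmetric] e2ennreal_neg)
next
  case False
  then have a: "a > 0" using assms by simp
  show ?thesis
  proof (cases d)
    case (real r)
    then show ?thesis using a by (simp add: ennreal_mult')
  next
    case PInf then show ?thesis using a by (simp add: ennreal_mult_top)
  next
    case MInf then show ?thesis using a by (simp add: e2ennreal_neg)
  qed
qed

lemma neg_part_mult_le_of_elogratio_le:
  assumes a: "0 \<le> a" and b: "0 \<le> b" and d: "elogratio a b \<le> d"
  shows "ennreal a * e2ennreal (- d) \<le> ennreal b"
proof (cases "a = 0")
  case True then show ?thesis by simp
next
  case False
  then have a0: "a > 0" using a by simp
  show ?thesis
  proof (cases "b = 0")
    case True
    then have "d = \<infinity>" using d a0 unfolding elogratio_def by simp
    then show ?thesis by (simp add: e2ennreal_neg)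
  next
    case False
    then have b0: "b > 0" using b by simp
    then have "ereal (ln (a / b)) \<le> d" using d a0 unfolding elogratio_def by simp
    then have "- d \<le> ereal (- ln (a / b))" by (metis ereal_minus_le_minus uminus_ereal.simps(1))
    then have "e2ennreal (- d) \<le> ennreal (- ln (a/b))" by (metis e2ennreal_ereal e2ennreal_mono)
    then have "ennreal a * e2ennreal (- d) \<le> ennreal a * ennreal (- ln (a/b))" by (rule mult_left_mono) simp
    also have "\<dots> = ennreal (a * (- ln (a/b)))" by (rule ennreal_mult'[OF a, symmetric])
    also have "a * (- ln (a/b)) \<le> b"
    proof -
      have "- ln (a/b) = ln (b/a)" using a0 b0 by (simp add: ln_div)
      also have "\<dots> \<le> b/a - 1" using a0 b0 by (intro ln_le_minus_one) simp
      finally have "a * (- ln (a/b)) \<le> a * (b/a - 1)" using a0 by (intro mult_left_mono) auto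
      also have "\<dots> = b - a" using a0 by (simp add: field_simps)
      finally show ?thesis using a by simp
    qed
    then have "ennreal (a * (- ln (a/b))) \<le> ennreal b" by (rule ennreal_leI)
    finally show ?thesis .
  qed
qed

lemma ennreal_le_add_of_diff_less:
  fixes P N :: ennreal
  assumes N: "N < top" and l: "enn2ereal P - enn2ereal N < ereal e" and e: "0 < e"
  shows "P \<le> N + ennreal e"
proof -
  obtain n where n: "N = ennreal n" "0 \<le> n" using N by (cases N) auto
  consider (r) p where "P = ennreal p" "0 \<le> p" | (t) "P = top" by (cases P rule: ennreal_cases) auto
  then show ?thesis
  proof cases
    case r
    then have "p - n < e" using l n by simp
    then have "ennreal p \<le> ennreal (n + e)" by (intro ennreal_leI) simp
    then show ?thesis using n r e by (simp add: ennreal_plus)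
  next
    case t then show ?thesis using l n by simp
  qed
qed

lemma ennreal_parts_le_of_le_add_sum:
  assumes "v \<le> a + (\<Sum>t\<in>T. c t)" "0 \<le> a" "finite T"
  shows "ennreal v + (\<Sum>t\<in>T. ennreal (- c t)) \<le> ennreal a + (\<Sum>t\<in>T. ennreal (c t)) + ennreal (- v)"
proof -
  have e: "ennreal x = ennreal (max x 0)" for x :: real by (simp add: max_def ennreal_neg)
  have ct: "c t = max (c t) 0 - max (- c t) 0" for t by (simp add: max_def)
  have "(\<Sum>t\<in>T. c t) = (\<Sum>t\<in>T. max (c t) 0 - max (- c t) 0)" by (subst ct) (rule refl)
  also have "\<dots> = (\<Sum>t\<in>T. max (c t) 0) - (\<Sum>t\<in>T. max (- c t) 0)" by (rule sum_subtractf)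
  finally have s: "(\<Sum>t\<in>T. c t) = (\<Sum>t\<in>T. max (c t) 0) - (\<Sum>t\<in>T. max (- c t) 0)" .
  have vv: "v = max v 0 - max (- v) 0" by (simp add: max_def)
  have r: "max v 0 + (\<Sum>t\<in>T. max (- c t) 0) \<le> a + (\<Sum>t\<in>T. max (c t) 0) + max (- v) 0"
    using assms(1) s vv by linarith
  have n1: "0 \<le> (\<Sum>t\<in>T. max (- c t) 0)" "0 \<le> (\<Sum>t\<in>T. max (c t) 0)" by (auto intro: sum_nonneg)
  have L: "ennreal v + (\<Sum>t\<in>T. ennreal (- c t)) = ennreal (max v 0 + (\<Sum>t\<in>T. max (- c t) 0))"
  proof -
    have "(\<Sum>t\<in>T. ennreal (- c t)) = (\<Sum>t\<in>T. ennreal (max (- c t) 0))" by (subst e) (rule refl)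
    also have "\<dots> = ennreal (\<Sum>t\<in>T. max (- c t) 0)" by (rule sum_ennreal) simp
    finally have A: "(\<Sum>t\<in>T. ennreal (- c t)) = ennreal (\<Sum>t\<in>T. max (- c t) 0)" .
    have B: "ennreal (max v 0 + (\<Sum>t\<in>T. max (- c t) 0)) = ennreal (max v 0) + ennreal (\<Sum>t\<in>T. max (- c t) 0)"
      by (rule ennreal_plus) (auto simp: n1)
    show ?thesis by (subst e[of v]) (simp only: A B)
  qed
  have R: "ennreal a + (\<Sum>t\<in>T. ennreal (c t)) + ennreal (- v) = ennreal (a + (\<Sum>t\<in>T. max (c t) 0) + max (- v) 0)"
  proof -
    have "(\<Sum>t\<in>T. ennreal (c t)) = (\<Sum>t\<in>T. ennreal (max (c t) 0))" by (subst e) (rule refl)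
    also have "\<dots> = ennreal (\<Sum>t\<in>T. max (c t) 0)" by (rule sum_ennreal) simp
    finally have A: "(\<Sum>t\<in>T. ennreal (c t)) = ennreal (\<Sum>t\<in>T. max (c t) 0)" .
    have B1: "ennreal (a + (\<Sum>t\<in>T. max (c t) 0) + max (- v) 0) = ennreal (a + (\<Sum>t\<in>T. max (c t) 0)) + ennreal (max (- v) 0)"
      using n1 assms(2) by (intro ennreal_plus) auto
    have B2: "ennreal (a + (\<Sum>t\<in>T. max (c t) 0)) = ennreal a + ennreal (\<Sum>t\<in>T. max (c t) 0)"
      using n1 assms(2) by (intro ennreal_plus) auto
    show ?thesis by (simp only: A B1 B2 e[of "- v", symmetric])
  qed
  show ?thesis unfolding L R by (rule ennreal_leI[OF r])
qed

lemma enn2ereal_diff_le_of_le_add: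
  fixes IGp IGm :: ennreal
  assumes "IGp \<le> ennreal B + IGm" "IGm < top" "0 \<le> B"
  shows "enn2ereal IGp - enn2ereal IGm \<le> ereal B"
proof -
  obtain m where m: "IGm = ennreal m" "0 \<le> m" using assms(2) by (cases IGm rule: ennreal_cases) auto
  have le: "IGp \<le> ennreal (B + m)" using assms m by (simp add: ennreal_plus)
  have "IGp \<noteq> top" using le by (metis ennreal_neq_top top_unique)
  then obtain p where p: "IGp = ennreal p" "0 \<le> p" by (cases IGp rule: ennreal_cases) auto
  have "p \<le> B + m" using le p ennreal_le_iff[of "B+m" p] assms(3) m(2) by (simp del: ennreal_plus)
  then show ?thesis using m p by simp
qed

lemma ln_mixture_ratio_le:
  fixes w b g h :: "'p \<Rightarrow> real" and Kc E :: real
  assumes fin: "finite P" and wb: "\<forall>x\<in>P. w x \<le> Kc * b x" and gh: "\<forall>x\<in>P. g x \<le> E * h x"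
    and nn: "\<forall>x\<in>P. 0 \<le> w x \<and> 0 \<le> g x \<and> 0 \<le> b x \<and> 0 \<le> h x"
    and p1: "0 < (\<Sum>x\<in>P. w x * g x)" and p2: "0 < (\<Sum>x\<in>P. b x * h x)"
    and Kc: "0 < Kc" and E: "0 < E"
  shows "ln ((\<Sum>x\<in>P. w x * g x) / (\<Sum>x\<in>P. b x * h x)) \<le> ln Kc + ln E"
proof -
  have "w x * g x \<le> Kc * b x * (E * h x)" if x: "x \<in> P" for x
    by (rule mult_mono) (use wb gh nn x in force)+
  then have "(\<Sum>x\<in>P. w x * g x) \<le> (\<Sum>x\<in>P. (Kc * b x) * (E * h x))"
    by (intro sum_mono) auto
  also have "\<dots> = Kc * E * (\<Sum>x\<in>P. b x * h x)" by (simp add: sum_distrib_left mult_ac)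
  finally have "(\<Sum>x\<in>P. w x * g x) / (\<Sum>x\<in>P. b x * h x) \<le> Kc * E" using p2 by (simp add: divide_le_eq)
  then have "ln ((\<Sum>x\<in>P. w x * g x) / (\<Sum>x\<in>P. b x * h x)) \<le> ln (Kc * E)"
    using p1 p2 Kc E by (subst ln_le_cancel_iff) auto
  then show ?thesis using Kc E by (simp add: ln_mult)
qed

lemma abs_le_mat_norm:
  assumes "i < k" "j < k"
  shows "\<bar>M i j\<bar> \<le> mat_norm k M"
proof -
  have "{\<bar>M i j\<bar> | i j. i < k \<and> j < k} \<subseteq> (\<lambda>(i,j). \<bar>M i j\<bar>) ` ({..<k} \<times> {..<k})" by auto
  then have "finite {\<bar>M i j\<bar> | i j. i < k \<and> j < k}" by (rule finite_subset) auto
  then show ?thesis unfolding mat_norm_def using assms by (intro Max_ge) auto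
qed

section \<open>The Kullback-Leibler bound\<close>

text \<open>Names ending in \<open>_s\<close> refer to the true parameter \<open>\<theta>* = (Qs, fs)\<close> started in its
  stationary law, the others to \<open>\<theta> = (Q, f)\<close> started in \<open>mu\<close>.\<close>

locale hmm_KL_bound =
  fixes k :: nat and lam :: "'a measure" and q \<epsilon> :: real and n :: nat
    and Qs Q :: "nat \<Rightarrow> nat \<Rightarrow> real" and fs f :: "nat \<Rightarrow> 'a \<Rightarrow> real" and mu :: "nat \<Rightarrow> real"
  assumes k: "k \<ge> 1" and lam: "sigma_finite_measure lam" and q: "q > 0"
    and true_param: "(Qs, fs) \<in> Theta_q k q lam" and param: "(Q, f) \<in> Theta_q k q lam"
    and mu_ge: "\<forall>i<k. q \<le> mu i"
    and A1: "A1_conds k lam (Qs, fs) \<epsilon> (Q, f)"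
    and eps: "\<epsilon> > 0" and n: "n \<ge> 1"
begin

abbreviation Y :: "(nat \<Rightarrow> 'a) measure" where
  "Y \<equiv> PiM {0..<n} (\<lambda>_. lam)"

definition paths :: "(nat \<Rightarrow> nat) set" where
  "paths = {0..<n} \<rightarrow>\<^sub>E {0..<k}"

definition wt_s :: "(nat \<Rightarrow> nat) \<Rightarrow> real" where
  "wt_s x = stat_dist k Qs (x 0) * (\<Prod>t\<in>{0..<n-1}. Qs (x t) (x (Suc t)))"

definition wt :: "(nat \<Rightarrow> nat) \<Rightarrow> real" where
  "wt x = mu (x 0) * (\<Prod>t\<in>{0..<n-1}. Q (x t) (x (Suc t)))"

definition em_s :: "(nat \<Rightarrow> nat) \<Rightarrow> (nat \<Rightarrow> 'a) \<Rightarrow> real" where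
  "em_s x y = (\<Prod>t\<in>{0..<n}. fs (x t) (y t))"

definition em :: "(nat \<Rightarrow> nat) \<Rightarrow> (nat \<Rightarrow> 'a) \<Rightarrow> real" where
  "em x y = (\<Prod>t\<in>{0..<n}. f (x t) (y t))"

abbreviation dens_s :: "(nat \<Rightarrow> 'a) \<Rightarrow> real" where
  "dens_s \<equiv> hmm_dens k n (stat_dist k Qs) (Qs, fs)"

abbreviation dens :: "(nat \<Rightarrow> 'a) \<Rightarrow> real" where
  "dens \<equiv> hmm_dens k n mu (Q, f)"

definition Dmax :: "'a \<Rightarrow> ereal" where
  "Dmax z = Max ((\<lambda>j. elogratio (fs j z) (f j z)) ` {0..<k})"

definition KL_integrand :: "(nat \<Rightarrow> 'a) \<Rightarrow> ereal" where
  "KL_integrand y = (if dens_s y = 0 then 0 else ereal (dens_s y * ln (dens_s y / dens y)))"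

definition path_log_bound :: real where
  "path_log_bound = ln (1/q) + real (n-1) * (\<epsilon>/q)"

lemma Delta_Qs: "Delta_q k q Qs" and Delta_Q: "Delta_q k q Q"
  using true_param param unfolding Theta_q_def by auto

lemma fs_density: "i < k \<Longrightarrow> is_density lam (fs i)"
  and f_density: "i < k \<Longrightarrow> is_density lam (f i)"
  using true_param param unfolding Theta_q_def by auto

lemma fs_nonneg: "i < k \<Longrightarrow> 0 \<le> fs i z" and f_nonneg: "i < k \<Longrightarrow> 0 \<le> f i z"
  using fs_density f_density unfolding is_density_def by auto

lemma fs_measurable: "i < k \<Longrightarrow> fs i \<in> borel_measurable lam"
  and f_measurable: "i < k \<Longrightarrow> f i \<in> borel_measurable lam"
  using fs_density f_density unfolding is_density_def by auto

lemma q_le_1: "q \<le> 1"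
  using Delta_q_le_1[OF Delta_Qs k] .

lemma path_log_bound_nonneg: "0 \<le> path_log_bound"
  unfolding path_log_bound_def using q q_le_1 eps by (auto intro!: add_nonneg_nonneg)

lemma finite_paths: "finite paths"
  unfolding paths_def by (simp add: finite_PiE)

lemma paths_lt: "x \<in> paths \<Longrightarrow> t < n \<Longrightarrow> x t < k"
  unfolding paths_def by auto

lemma dens_s_eq: "dens_s y = (\<Sum>x\<in>paths. wt_s x * em_s x y)"
  using n unfolding hmm_dens_def paths_def wt_s_def em_s_def by (simp add: mult.assoc)

lemma dens_eq: "dens y = (\<Sum>x\<in>paths. wt x * em x y)"
  using n unfolding hmm_dens_def paths_def wt_def em_def by (simp add: mult.assoc)

lemma wt_s_nonneg:
  assumes x: "x \<in> paths"
  shows "0 \<le> wt_s x"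
proof -
  have "0 \<le> stat_dist k Qs (x 0)"
    using stat_dist_distr[OF Delta_Qs k q] paths_lt[OF x, of 0] n unfolding distr_on_def by simp
  moreover have "0 \<le> (\<Prod>t\<in>{0..<n-1}. Qs (x t) (x (Suc t)))"
    using paths_lt[OF x] by (intro prod_nonneg Delta_q_nonneg[OF Delta_Qs]) auto
  ultimately show ?thesis unfolding wt_s_def by simp
qed

lemma wt_pos:
  assumes x: "x \<in> paths"
  shows "0 < wt x"
proof -
  have "0 < mu (x 0)" using mu_ge paths_lt[OF x, of 0] n q by force
  moreover have "0 < (\<Prod>t\<in>{0..<n-1}. Q (x t) (x (Suc t)))"
  proof (intro prod_pos)
    fix t assume "t \<in> {0..<n-1}"
    then have "x t < k" "x (Suc t) < k" using paths_lt[OF x] by auto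
    then show "0 < Q (x t) (x (Suc t))" using Delta_Q q unfolding Delta_q_def by fastforce
  qed
  ultimately show ?thesis unfolding wt_def by simp
qed

lemma em_s_nonneg: "x \<in> paths \<Longrightarrow> 0 \<le> em_s x y"
  unfolding em_s_def using fs_nonneg paths_lt by (auto intro!: prod_nonneg)

lemma em_nonneg: "x \<in> paths \<Longrightarrow> 0 \<le> em x y"
  unfolding em_def using f_nonneg paths_lt by (auto intro!: prod_nonneg)

lemma dens_s_nonneg: "0 \<le> dens_s y"
  unfolding dens_s_eq using wt_s_nonneg em_s_nonneg by (auto intro!: sum_nonneg)

lemma dens_nonneg: "0 \<le> dens y"
  unfolding dens_eq using wt_pos em_nonneg by (intro sum_nonneg mult_nonneg_nonneg) (auto intro: less_imp_le)

lemma sum_wt_s: "(\<Sum>x\<in>paths. wt_s x) = 1"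
proof -
  obtain m where m: "n = Suc m" using n by (cases n) auto
  have "(\<Sum>x\<in>{0..<Suc m} \<rightarrow>\<^sub>E {0..<k}. stat_dist k Qs (x 0) * (\<Prod>t\<in>{0..<m}. Qs (x t) (x (Suc t)))) = 1"
    using stat_dist_distr[OF Delta_Qs k q] Delta_q_row_sum[OF Delta_Qs]
    by (intro sum_path_weights_eq_1) (auto simp: distr_on_def atLeast0LessThan)
  then show ?thesis using m unfolding paths_def wt_s_def by simp
qed

lemma component_measurable:
  fixes g :: "'a \<Rightarrow> 'c::{second_countable_topology,topological_space}"
  shows "g \<in> borel_measurable lam \<Longrightarrow> t < n \<Longrightarrow> (\<lambda>y. g (y t)) \<in> borel_measurable Y"
  by (intro measurable_compose[OF measurable_component_singleton]) auto

lemma dens_s_measurable [measurable]: "dens_s \<in> borel_measurable Y"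
proof -
  have "(\<lambda>y. em_s x y) \<in> borel_measurable Y" if "x \<in> paths" for x
    unfolding em_s_def using paths_lt[OF that] fs_measurable
    by (intro borel_measurable_prod component_measurable) auto
  then show ?thesis unfolding dens_s_eq[abs_def] by measurable
qed

lemma dens_measurable [measurable]: "dens \<in> borel_measurable Y"
proof -
  have "(\<lambda>y. em x y) \<in> borel_measurable Y" if "x \<in> paths" for x
    unfolding em_def using paths_lt[OF that] f_measurable
    by (intro borel_measurable_prod component_measurable) auto
  then show ?thesis unfolding dens_eq[abs_def] by measurable
qed

lemma elogratio_le_Dmax: "j < k \<Longrightarrow> elogratio (fs j z) (f j z) \<le> Dmax z"
  unfolding Dmax_def by (rule Max_ge) auto

lemma Dmax_measurable: "Dmax \<in> borel_measurable lam"
proof -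
  have "(\<lambda>z. elogratio (fs j z) (f j z)) \<in> borel_measurable lam" if "j < k" for j
  proof -
    note [measurable] = fs_measurable[OF that] f_measurable[OF that]
    show ?thesis unfolding elogratio_def by measurable
  qed
  then show ?thesis unfolding Dmax_def[abs_def] by (intro borel_measurable_Max) auto
qed

lemma trans_close: "i < k \<Longrightarrow> j < k \<Longrightarrow> Qs i j \<le> (1 + \<epsilon>/q) * Q i j"
proof -
  assume ij: "i < k" "j < k"
  have "\<bar>Q i j - Qs i j\<bar> < \<epsilon>"
    using abs_le_mat_norm[OF ij, of "\<lambda>i j. Q i j - Qs i j"] A1
    unfolding A1_conds_def Let_def by simp
  moreover have "\<epsilon> \<le> \<epsilon>/q * Q i j"
    using mult_left_mono[of q "Q i j" "\<epsilon>/q"] Delta_Q ij q eps unfolding Delta_q_def by simp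
  ultimately show ?thesis by (simp add: algebra_simps)
qed

lemma logratio_integral_less: "i < k \<Longrightarrow> eint lam (\<lambda>z. ereal (fs i z) * Dmax z) < ereal \<epsilon>"
proof -
  assume i: "i < k"
  have "eint lam (\<lambda>z. ereal (fs i z) * Dmax z)
      \<le> Max ((\<lambda>i. eint lam (\<lambda>z. ereal (fs i z) * Dmax z)) ` {0..<k})"
    using i by (intro Max_ge) auto
  also have "\<dots> < ereal \<epsilon>" using A1 unfolding A1_conds_def Let_def Dmax_def by simp
  finally show ?thesis .
qed

lemma support_sum_pos: "(\<Sum>i<k. fs i z) > 0 \<Longrightarrow> (\<Sum>j<k. f j z) > 0"
  using A1 unfolding A1_conds_def Let_def by simp

subsection \<open>The pointwise bound on the log-likelihood ratio\<close>

lemma wt_s_le: "x \<in> paths \<Longrightarrow> wt_s x \<le> (1/q) * (1 + \<epsilon>/q) ^ (n-1) * wt x"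
proof -
  assume x: "x \<in> paths"
  have x0: "x 0 < k" using paths_lt[OF x, of 0] n by simp
  have "stat_dist k Qs (x 0) \<le> (\<Sum>i<k. stat_dist k Qs i)"
    using stat_dist_distr[OF Delta_Qs k q] x0 unfolding distr_on_def by (intro member_le_sum) auto
  also have "\<dots> = 1" using stat_dist_distr[OF Delta_Qs k q] unfolding distr_on_def by simp
  also have "1 \<le> mu (x 0) / q" using mu_ge x0 q by simp
  finally have init: "stat_dist k Qs (x 0) \<le> mu (x 0) / q" .
  have "(\<Prod>t\<in>{0..<n-1}. Qs (x t) (x (Suc t))) \<le> (\<Prod>t\<in>{0..<n-1}. (1 + \<epsilon>/q) * Q (x t) (x (Suc t)))"
    using paths_lt[OF x] Delta_q_nonneg[OF Delta_Qs] trans_close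
    by (intro prod_mono) (simp add: less_diff_conv)
  also have "\<dots> = (1 + \<epsilon>/q) ^ (n-1) * (\<Prod>t\<in>{0..<n-1}. Q (x t) (x (Suc t)))"
    by (simp add: prod.distrib)
  finally have trans: "(\<Prod>t\<in>{0..<n-1}. Qs (x t) (x (Suc t)))
      \<le> (1 + \<epsilon>/q) ^ (n-1) * (\<Prod>t\<in>{0..<n-1}. Q (x t) (x (Suc t)))" .
  have "wt_s x \<le> (mu (x 0) / q) * ((1 + \<epsilon>/q) ^ (n-1) * (\<Prod>t\<in>{0..<n-1}. Q (x t) (x (Suc t))))"
    unfolding wt_s_def using mu_ge x0 q paths_lt[OF x] Delta_q_nonneg[OF Delta_Qs]
    by (intro mult_mono[OF init trans] prod_nonneg) (auto simp: less_diff_conv)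
  also have "\<dots> = (1/q) * (1 + \<epsilon>/q) ^ (n-1) * wt x" unfolding wt_def by (simp add: field_simps)
  finally show ?thesis .
qed

lemma em_s_le:
  assumes x: "x \<in> paths" and d: "\<forall>t<n. Dmax (y t) \<le> ereal (d t)"
  shows "em_s x y \<le> (\<Prod>t\<in>{0..<n}. exp (d t)) * em x y"
proof (cases "\<forall>t<n. fs (x t) (y t) > 0")
  case False
  then obtain t where "t < n" "\<not> fs (x t) (y t) > 0" by blast
  then have "em_s x y = 0" unfolding em_s_def using fs_nonneg[OF paths_lt[OF x]]
    by (metis atLeastLessThan_iff finite_atLeastLessThan le0 less_le prod_zero_iff)
  then show ?thesis using em_nonneg[OF x] by (simp add: prod_nonneg)
next
  case True
  have "fs (x t) (y t) \<le> exp (d t) * f (x t) (y t)" if t: "t < n" for t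
  proof -
    have le: "elogratio (fs (x t) (y t)) (f (x t) (y t)) \<le> ereal (d t)"
      using elogratio_le_Dmax[OF paths_lt[OF x t]] d t by (meson order_trans)
    then have fpos: "f (x t) (y t) > 0"
      using True t f_nonneg[OF paths_lt[OF x t]] unfolding elogratio_def by (auto simp: less_le)
    then have "ln (fs (x t) (y t) / f (x t) (y t)) \<le> d t"
      using le True t unfolding elogratio_def by simp
    then have "fs (x t) (y t) / f (x t) (y t) \<le> exp (d t)"
      using True t fpos by (metis divide_pos_pos exp_le_cancel_iff exp_ln)
    then show ?thesis using fpos by (simp add: divide_le_eq mult.commute)
  qed
  then have "em_s x y \<le> (\<Prod>t\<in>{0..<n}. exp (d t) * f (x t) (y t))" unfolding em_s_def
    using fs_nonneg[OF paths_lt[OF x]] by (intro prod_mono) auto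
  also have "\<dots> = (\<Prod>t\<in>{0..<n}. exp (d t)) * em x y" unfolding em_def by (simp add: prod.distrib)
  finally show ?thesis .
qed

lemma support_path:
  assumes "dens_s y > 0"
  obtains x where "x \<in> paths" "\<And>t. t < n \<Longrightarrow> fs (x t) (y t) > 0"
proof -
  have "\<exists>x\<in>paths. wt_s x * em_s x y \<noteq> 0"
  proof (rule ccontr)
    assume "\<not> ?thesis"
    then have "dens_s y = 0" unfolding dens_s_eq by (intro sum.neutral) auto
    with assms show False by simp
  qed
  then obtain x where x: "x \<in> paths" "wt_s x * em_s x y \<noteq> 0" by blast
  then have "fs (x t) (y t) > 0" if "t < n" for t
    using that fs_nonneg[OF paths_lt[OF x(1) that]] unfolding em_s_def by (auto simp: less_le)
  with x(1) that show ?thesis by blast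
qed

text \<open>By (A1c) every observation that \<open>\<theta>*\<close> can emit is emitted by some state of \<open>\<theta>\<close>, and every
  path has positive weight under \<open>\<theta>\<close>.\<close>

lemma dens_pos: "dens_s y > 0 \<Longrightarrow> dens y > 0"
proof -
  assume pos: "dens_s y > 0"
  obtain x where x: "x \<in> paths" and fpos: "\<And>t. t < n \<Longrightarrow> fs (x t) (y t) > 0"
    using support_path[OF pos] by blast
  have "\<exists>j<k. f j (y t) > 0" if t: "t < n" for t
  proof -
    have "fs (x t) (y t) \<le> (\<Sum>i<k. fs i (y t))"
      using paths_lt[OF x t] fs_nonneg by (intro member_le_sum) auto
    then have "(\<Sum>j<k. f j (y t)) > 0" using fpos[OF t] support_sum_pos by force
    then show ?thesis by (metis not_le sum_nonpos lessThan_iff)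
  qed
  then obtain J where J: "\<And>t. t < n \<Longrightarrow> J t < k \<and> f (J t) (y t) > 0" by metis
  define xJ where "xJ = restrict J {0..<n}"
  have xJ: "xJ \<in> paths" unfolding paths_def xJ_def using J by auto
  have "0 < wt xJ * em xJ y"
    using wt_pos[OF xJ] J unfolding em_def xJ_def by (intro mult_pos_pos prod_pos) auto
  also have "\<dots> \<le> dens y" unfolding dens_eq
    using finite_paths xJ wt_pos em_nonneg
    by (intro member_le_sum) (auto intro: less_imp_le mult_nonneg_nonneg)
  finally show ?thesis .
qed

lemma Dmax_neq_MInf:
  assumes pos: "dens_s y > 0" and t: "t < n"
  shows "Dmax (y t) \<noteq> -\<infinity>"
proof -
  obtain x where x: "x \<in> paths" and fpos: "fs (x t) (y t) > 0"
    using support_path[OF pos] t by metis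
  have "elogratio (fs (x t) (y t)) (f (x t) (y t)) \<noteq> -\<infinity>"
    using fpos unfolding elogratio_def by auto
  then show ?thesis using elogratio_le_Dmax[OF paths_lt[OF x t], of "y t"] by auto
qed

lemma ln_ratio_le:
  assumes pos: "dens_s y > 0" and d: "\<forall>t<n. Dmax (y t) \<le> ereal (d t)"
  shows "ln (dens_s y / dens y) \<le> path_log_bound + (\<Sum>t\<in>{0..<n}. d t)"
proof -
  define K where "K = (1/q) * (1 + \<epsilon>/q) ^ (n-1)"
  have base: "0 < 1 + \<epsilon>/q" using q eps by (simp add: add_pos_pos)
  then have K: "0 < K" unfolding K_def using q by simp
  have ratio: "ln (dens_s y / dens y) \<le> ln K + ln (\<Prod>t\<in>{0..<n}. exp (d t))"
    unfolding dens_s_eq dens_eq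
  proof (rule ln_mixture_ratio_le[OF finite_paths])
    show "\<forall>x\<in>paths. wt_s x \<le> K * wt x" using wt_s_le unfolding K_def by blast
    show "\<forall>x\<in>paths. em_s x y \<le> (\<Prod>t\<in>{0..<n}. exp (d t)) * em x y" using em_s_le d by blast
    show "\<forall>x\<in>paths. 0 \<le> wt_s x \<and> 0 \<le> em_s x y \<and> 0 \<le> wt x \<and> 0 \<le> em x y"
      using wt_s_nonneg em_s_nonneg wt_pos em_nonneg by (auto intro: less_imp_le)
    show "0 < (\<Sum>x\<in>paths. wt_s x * em_s x y)" using pos dens_s_eq by simp
    show "0 < (\<Sum>x\<in>paths. wt x * em x y)" using dens_pos[OF pos] dens_eq by simp
  qed (use K in \<open>auto intro: prod_pos\<close>)
  have "ln K = ln (1/q) + real (n-1) * ln (1 + \<epsilon>/q)"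
    unfolding K_def using q base by (subst ln_mult_pos) (simp_all add: ln_realpow)
  also have "\<dots> \<le> path_log_bound"
    unfolding path_log_bound_def using q eps
    by (intro add_left_mono mult_left_mono ln_add_one_self_le_self) auto
  finally show ?thesis using ratio by (simp add: ln_prod)
qed

text \<open>The bound \<open>p* ln (p*/p) \<le> p* (path_log_bound + \<Sum>\<^sub>t Dmax y\<^sub>t)\<close>, with both sides split into
  nonnegative parts so that it survives infinite values of \<open>Dmax\<close>.\<close>

lemma KL_integrand_parts_le:
  "e2ennreal (KL_integrand y) + (\<Sum>t\<in>{0..<n}. ennreal (dens_s y) * e2ennreal (- Dmax (y t)))
   \<le> ennreal (dens_s y * path_log_bound) + (\<Sum>t\<in>{0..<n}. ennreal (dens_s y) * e2ennreal (Dmax (y t)))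
     + e2ennreal (- KL_integrand y)"
proof (cases "dens_s y = 0")
  case True then show ?thesis by (simp add: KL_integrand_def)
next
  case False
  then have pos: "dens_s y > 0" using dens_s_nonneg[of y] by simp
  show ?thesis
  proof (cases "\<exists>t<n. Dmax (y t) = \<infinity>")
    case True
    then obtain t where t: "t < n" "Dmax (y t) = \<infinity>" by blast
    have "ennreal (dens_s y) * e2ennreal (Dmax (y t)) = top"
      using t pos by (simp add: ennreal_mult_top)
    then have S: "(\<Sum>t\<in>{0..<n}. ennreal (dens_s y) * e2ennreal (Dmax (y t))) = top"
      using t member_le_sum[of t "{0..<n}" "\<lambda>t. ennreal (dens_s y) * e2ennreal (Dmax (y t))"]
      by (simp add: top_unique)
    show ?thesis by (subst S) simp
  next
    case False
    define d where "d t = real_of_ereal (Dmax (y t))" for t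
    have Dd: "Dmax (y t) = ereal (d t)" if "t < n" for t
      using False Dmax_neq_MInf[OF pos that] that unfolding d_def by (cases "Dmax (y t)") auto
    have "ln (dens_s y / dens y) \<le> path_log_bound + (\<Sum>t\<in>{0..<n}. d t)"
      using ln_ratio_le[OF pos] Dd by simp
    then have "dens_s y * ln (dens_s y / dens y)
        \<le> dens_s y * path_log_bound + (\<Sum>t\<in>{0..<n}. dens_s y * d t)"
      using mult_left_mono[OF _ dens_s_nonneg] by (fastforce simp: distrib_left sum_distrib_left)
    from ennreal_parts_le_of_le_add_sum[OF this] path_log_bound_nonneg dens_s_nonneg[of y]
    have parts: "ennreal (dens_s y * ln (dens_s y / dens y)) + (\<Sum>t\<in>{0..<n}. ennreal (- (dens_s y * d t)))
        \<le> ennreal (dens_s y * path_log_bound) + (\<Sum>t\<in>{0..<n}. ennreal (dens_s y * d t))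
          + ennreal (- (dens_s y * ln (dens_s y / dens y)))" by simp
    have "(\<Sum>t\<in>{0..<n}. ennreal (dens_s y) * e2ennreal (Dmax (y t))) = (\<Sum>t\<in>{0..<n}. ennreal (dens_s y * d t))"
      "(\<Sum>t\<in>{0..<n}. ennreal (dens_s y) * e2ennreal (- Dmax (y t))) = (\<Sum>t\<in>{0..<n}. ennreal (- (dens_s y * d t)))"
      using Dd dens_s_nonneg[of y] by (auto intro!: sum.cong simp: ennreal_mult'[symmetric])
    with parts pos show ?thesis by (simp add: KL_integrand_def)
  qed
qed

subsection \<open>Integrating the pointwise bound\<close>

lemma nn_integral_dens_s_component:
  assumes "F \<in> borel_measurable lam" "t < n"
  shows "(\<integral>\<^sup>+y. ennreal (dens_s y) * F (y t) \<partial>Y)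
       = (\<Sum>x\<in>paths. ennreal (wt_s x) * (\<integral>\<^sup>+z. ennreal (fs (x t) z) * F z \<partial>lam))"
  unfolding dens_s_eq em_s_def
  by (rule nn_integral_PiM_mixture[where \<phi>="\<lambda>x s. fs (x s)", OF lam finite_paths assms(2) _ _ assms(1)])
     (use fs_density paths_lt wt_s_nonneg in auto)

lemma nn_integral_dens_component:
  assumes "F \<in> borel_measurable lam" "t < n"
  shows "(\<integral>\<^sup>+y. ennreal (dens y) * F (y t) \<partial>Y)
       = (\<Sum>x\<in>paths. ennreal (wt x) * (\<integral>\<^sup>+z. ennreal (f (x t) z) * F z \<partial>lam))"
  unfolding dens_eq em_def
  by (rule nn_integral_PiM_mixture[where \<phi>="\<lambda>x s. f (x s)", OF lam finite_paths assms(2) _ _ assms(1)])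
     (use f_density paths_lt wt_pos in \<open>auto intro: less_imp_le\<close>)

lemma nn_integral_dens_finite: "(\<integral>\<^sup>+y. ennreal (dens y) \<partial>Y) < top"
proof -
  have "(\<integral>\<^sup>+y. ennreal (dens y) \<partial>Y) = (\<integral>\<^sup>+y. ennreal (dens y) * (\<lambda>_. 1) (y 0) \<partial>Y)" by simp
  also have "\<dots> = (\<Sum>x\<in>paths. ennreal (wt x) * (\<integral>\<^sup>+z. ennreal (f (x 0) z) * 1 \<partial>lam))"
    using n by (intro nn_integral_dens_component) auto
  also have "\<dots> = (\<Sum>x\<in>paths. ennreal (wt x))"
    using f_density paths_lt[of _ 0] n by (intro sum.cong refl) (simp add: is_density_def)
  finally show ?thesis using finite_paths by (simp add: less_top[symmetric])
qed

lemma nn_integral_dens_s_const: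
  assumes a: "0 \<le> a"
  shows "(\<integral>\<^sup>+y. ennreal (dens_s y * a) \<partial>Y) = ennreal a"
proof -
  have "(\<integral>\<^sup>+y. ennreal (dens_s y * a) \<partial>Y) = (\<integral>\<^sup>+y. ennreal (dens_s y) * (\<lambda>_. ennreal a) (y 0) \<partial>Y)"
    by (simp add: ennreal_mult[OF dens_s_nonneg a])
  also have "\<dots> = (\<Sum>x\<in>paths. ennreal (wt_s x) * (\<integral>\<^sup>+z. ennreal (fs (x 0) z) * ennreal a \<partial>lam))"
    using n by (intro nn_integral_dens_s_component) auto
  also have "\<dots> = (\<Sum>x\<in>paths. ennreal (wt_s x) * ennreal a)"
  proof (intro sum.cong refl)
    fix x assume x: "x \<in> paths"
    have x0: "x 0 < k" using paths_lt[OF x, of 0] n by simp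
    have "(\<integral>\<^sup>+z. ennreal (fs (x 0) z) * ennreal a \<partial>lam) = (\<integral>\<^sup>+z. ennreal (fs (x 0) z) \<partial>lam) * ennreal a"
      using fs_measurable[OF x0] by (intro nn_integral_multc) simp
    then show "ennreal (wt_s x) * (\<integral>\<^sup>+z. ennreal (fs (x 0) z) * ennreal a \<partial>lam) = ennreal (wt_s x) * ennreal a"
      using fs_density[OF x0] by (simp add: is_density_def)
  qed
  also have "\<dots> = ennreal a"
    using sum_wt_s wt_s_nonneg by (simp add: sum_distrib_right[symmetric] sum_ennreal)
  finally show ?thesis .
qed

lemma neg_KL_integrand_le: "e2ennreal (- KL_integrand y) \<le> ennreal (dens y)"
proof (cases "dens_s y = 0")
  case False
  then have pos: "dens_s y > 0" using dens_s_nonneg[of y] by simp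
  have "e2ennreal (- KL_integrand y) = ennreal (dens_s y) * e2ennreal (- ereal (ln (dens_s y / dens y)))"
    using e2ennreal_mult_ereal[OF dens_s_nonneg, of y "- ereal (ln (dens_s y / dens y))"] False
    by (simp add: KL_integrand_def)
  also have "\<dots> \<le> ennreal (dens y)"
    using pos dens_pos[OF pos]
    by (intro neg_part_mult_le_of_elogratio_le dens_s_nonneg dens_nonneg) (simp add: elogratio_def)
  finally show ?thesis .
qed (simp add: KL_integrand_def)

lemma neg_Dmax_integral_le_1: "i < k \<Longrightarrow> (\<integral>\<^sup>+z. ennreal (fs i z) * e2ennreal (- Dmax z) \<partial>lam) \<le> 1"
proof -
  assume i: "i < k"
  have "(\<integral>\<^sup>+z. ennreal (fs i z) * e2ennreal (- Dmax z) \<partial>lam) \<le> (\<integral>\<^sup>+z. ennreal (f i z) \<partial>lam)"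
    using fs_nonneg[OF i] f_nonneg[OF i] elogratio_le_Dmax[OF i]
    by (intro nn_integral_mono neg_part_mult_le_of_elogratio_le)
  also have "\<dots> = 1" using f_density[OF i] unfolding is_density_def by simp
  finally show ?thesis .
qed

lemma pos_Dmax_integral_le:
  assumes i: "i < k"
  shows "(\<integral>\<^sup>+z. ennreal (fs i z) * e2ennreal (Dmax z) \<partial>lam)
       \<le> (\<integral>\<^sup>+z. ennreal (fs i z) * e2ennreal (- Dmax z) \<partial>lam) + ennreal \<epsilon>"
proof (rule ennreal_le_add_of_diff_less[OF _ _ eps])
  show "(\<integral>\<^sup>+z. ennreal (fs i z) * e2ennreal (- Dmax z) \<partial>lam) < top"
    using neg_Dmax_integral_le_1[OF i] by (simp add: le_less_trans)
  have "e2ennreal (- (ereal (fs i z) * Dmax z)) = ennreal (fs i z) * e2ennreal (- Dmax z)" for z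
    using e2ennreal_mult_ereal[OF fs_nonneg[OF i], of z "- Dmax z"] by simp
  then show "enn2ereal (\<integral>\<^sup>+z. ennreal (fs i z) * e2ennreal (Dmax z) \<partial>lam)
      - enn2ereal (\<integral>\<^sup>+z. ennreal (fs i z) * e2ennreal (- Dmax z) \<partial>lam) < ereal \<epsilon>"
    using logratio_integral_less[OF i]
    by (simp add: eint_def e2ennreal_mult_ereal[OF fs_nonneg[OF i]])
qed

lemma nn_integral_dens_s_Dmax:
  assumes "t < n"
  shows "(\<integral>\<^sup>+y. ennreal (dens_s y) * e2ennreal (Dmax (y t)) \<partial>Y)
       = (\<Sum>x\<in>paths. ennreal (wt_s x) * (\<integral>\<^sup>+z. ennreal (fs (x t) z) * e2ennreal (Dmax z) \<partial>lam))"
    and "(\<integral>\<^sup>+y. ennreal (dens_s y) * e2ennreal (- Dmax (y t)) \<partial>Y)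
       = (\<Sum>x\<in>paths. ennreal (wt_s x) * (\<integral>\<^sup>+z. ennreal (fs (x t) z) * e2ennreal (- Dmax z) \<partial>lam))"
  using assms Dmax_measurable by (auto intro!: nn_integral_dens_s_component)

lemma sum_neg_Dmax_integrals_finite:
  "(\<Sum>t\<in>{0..<n}. \<integral>\<^sup>+y. ennreal (dens_s y) * e2ennreal (- Dmax (y t)) \<partial>Y) \<noteq> top"
proof -
  have "(\<integral>\<^sup>+z. ennreal (fs i z) * e2ennreal (- Dmax z) \<partial>lam) \<noteq> top" if "i < k" for i
    using neg_Dmax_integral_le_1[OF that] by (auto simp: top_unique)
  then show ?thesis
    using paths_lt finite_paths by (auto simp: nn_integral_dens_s_Dmax ennreal_mult_eq_top_iff)
qed

lemma sum_pos_Dmax_integrals_le: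
  "(\<Sum>t\<in>{0..<n}. \<integral>\<^sup>+y. ennreal (dens_s y) * e2ennreal (Dmax (y t)) \<partial>Y)
   \<le> (\<Sum>t\<in>{0..<n}. \<integral>\<^sup>+y. ennreal (dens_s y) * e2ennreal (- Dmax (y t)) \<partial>Y) + ennreal (real n * \<epsilon>)"
proof -
  have "(\<integral>\<^sup>+y. ennreal (dens_s y) * e2ennreal (Dmax (y t)) \<partial>Y)
      \<le> (\<integral>\<^sup>+y. ennreal (dens_s y) * e2ennreal (- Dmax (y t)) \<partial>Y)
        + (\<Sum>x\<in>paths. ennreal (wt_s x) * ennreal \<epsilon>)" if t: "t < n" for t
  proof -
    have "(\<Sum>x\<in>paths. ennreal (wt_s x) * (\<integral>\<^sup>+z. ennreal (fs (x t) z) * e2ennreal (Dmax z) \<partial>lam))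
        \<le> (\<Sum>x\<in>paths. ennreal (wt_s x) *
            ((\<integral>\<^sup>+z. ennreal (fs (x t) z) * e2ennreal (- Dmax z) \<partial>lam) + ennreal \<epsilon>))"
      using pos_Dmax_integral_le paths_lt t by (intro sum_mono mult_left_mono) auto
    then show ?thesis by (simp add: nn_integral_dens_s_Dmax[OF t] distrib_left sum.distrib)
  qed
  then have "(\<Sum>t\<in>{0..<n}. \<integral>\<^sup>+y. ennreal (dens_s y) * e2ennreal (Dmax (y t)) \<partial>Y)
      \<le> (\<Sum>t\<in>{0..<n}. \<integral>\<^sup>+y. ennreal (dens_s y) * e2ennreal (- Dmax (y t)) \<partial>Y)
        + (\<Sum>t\<in>{0..<n}. \<Sum>x\<in>paths. ennreal (wt_s x) * ennreal \<epsilon>)"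
    unfolding sum.distrib[symmetric] by (intro sum_mono) auto
  also have "(\<Sum>t\<in>{0..<n}. \<Sum>x\<in>paths. ennreal (wt_s x) * ennreal \<epsilon>) = ennreal (real n * \<epsilon>)"
    using sum_wt_s wt_s_nonneg eps
    by (simp add: sum_distrib_right[symmetric] sum_ennreal ennreal_mult ennreal_of_nat_eq_real_of_nat)
  finally show ?thesis .
qed

lemma KL_integrand_eint_le: "eint Y KL_integrand \<le> ereal (path_log_bound + real n * \<epsilon>)"
proof -
  note Dmax_measurable[measurable]
  let ?Dp = "\<lambda>y t. ennreal (dens_s y) * e2ennreal (Dmax (y t))"
  let ?Dm = "\<lambda>y t. ennreal (dens_s y) * e2ennreal (- Dmax (y t))"
  define SP where "SP = (\<Sum>t\<in>{0..<n}. \<integral>\<^sup>+y. ?Dp y t \<partial>Y)"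
  define SN where "SN = (\<Sum>t\<in>{0..<n}. \<integral>\<^sup>+y. ?Dm y t \<partial>Y)"
  have Dp_meas: "(\<lambda>y. ?Dp y t) \<in> borel_measurable Y" and Dm_meas: "(\<lambda>y. ?Dm y t) \<in> borel_measurable Y"
    if "t \<in> {0..<n}" for t
    using that by (auto intro!: borel_measurable_times_ennreal component_measurable)
  have "(\<integral>\<^sup>+y. e2ennreal (KL_integrand y) \<partial>Y) + SN
      = (\<integral>\<^sup>+y. e2ennreal (KL_integrand y) + (\<Sum>t\<in>{0..<n}. ?Dm y t) \<partial>Y)"
    unfolding SN_def KL_integrand_def using Dm_meas
    by (subst nn_integral_add) (auto simp: nn_integral_sum)
  also have "\<dots> \<le> (\<integral>\<^sup>+y. ennreal (dens_s y * path_log_bound) + (\<Sum>t\<in>{0..<n}. ?Dp y t)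
      + e2ennreal (- KL_integrand y) \<partial>Y)"
    by (intro nn_integral_mono KL_integrand_parts_le)
  also have "\<dots> = ennreal path_log_bound + SP + (\<integral>\<^sup>+y. e2ennreal (- KL_integrand y) \<partial>Y)"
    unfolding SP_def KL_integrand_def using Dp_meas path_log_bound_nonneg
    by (simp add: nn_integral_add nn_integral_sum nn_integral_dens_s_const)
  also have "\<dots> \<le> ennreal path_log_bound + (SN + ennreal (real n * \<epsilon>))
      + (\<integral>\<^sup>+y. e2ennreal (- KL_integrand y) \<partial>Y)"
    using sum_pos_Dmax_integrals_le unfolding SP_def SN_def by (intro add_mono order_refl)
  also have "\<dots> = SN + (ennreal (path_log_bound + real n * \<epsilon>) + (\<integral>\<^sup>+y. e2ennreal (- KL_integrand y) \<partial>Y))"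
    using path_log_bound_nonneg eps by (simp add: ennreal_plus[symmetric] add_ac del: ennreal_plus)
  finally have "(\<integral>\<^sup>+y. e2ennreal (KL_integrand y) \<partial>Y)
      \<le> ennreal (path_log_bound + real n * \<epsilon>) + (\<integral>\<^sup>+y. e2ennreal (- KL_integrand y) \<partial>Y)"
    using sum_neg_Dmax_integrals_finite unfolding SN_def
    by (simp add: add.commute[of _ "\<Sum>t\<in>{0..<n}. _"] ennreal_add_left_cancel_le)
  moreover have "(\<integral>\<^sup>+y. e2ennreal (- KL_integrand y) \<partial>Y) < top"
    using nn_integral_mono[OF neg_KL_integrand_le] nn_integral_dens_finite by (rule le_less_trans)
  ultimately show ?thesis
    unfolding eint_def using path_log_bound_nonneg eps
    by (intro enn2ereal_diff_le_of_le_add) auto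
qed

lemma absolutely_continuous_dens:
  "absolutely_continuous (density Y (\<lambda>y. ennreal (dens y))) (density Y (\<lambda>y. ennreal (dens_s y)))"
  unfolding absolutely_continuous_def
proof
  fix A assume "A \<in> null_sets (density Y (\<lambda>y. ennreal (dens y)))"
  then have A: "A \<in> sets Y" "AE y in Y. y \<in> A \<longrightarrow> ennreal (dens y) = 0"
    by (simp_all add: null_sets_density_iff)
  from A(2) have "AE y in Y. y \<in> A \<longrightarrow> ennreal (dens_s y) = 0"
    by eventually_elim (metis dens_pos dens_s_nonneg ennreal_eq_0_iff less_le not_le)
  with A(1) show "A \<in> null_sets (density Y (\<lambda>y. ennreal (dens_s y)))"
    by (simp add: null_sets_density_iff)
qed

lemma KL_dens_le: "KL_dens (prod_ref lam n) dens_s dens \<le> ereal (path_log_bound + real n * \<epsilon>)"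
  using KL_integrand_eint_le absolutely_continuous_dens
  unfolding KL_dens_def prod_ref_def KL_integrand_def by simp

end

lemma KL_rate_arith:
  fixes q \<epsilon> :: real
  assumes q: "0 < q" "q \<le> 1" and eps: "0 < \<epsilon>" and n: "ln (1/q) \<le> real n * \<epsilon>"
  shows "ln (1/q) + real (n-1) * (\<epsilon>/q) + real n * \<epsilon> \<le> real n * (3 / q * \<epsilon>)"
proof -
  have "real n * \<epsilon> \<le> real n * \<epsilon> / q"
    using q eps by (simp add: le_divide_eq mult_left_le)
  moreover have "real (n-1) * (\<epsilon>/q) \<le> real n * \<epsilon> / q"
    using q eps by (simp add: divide_right_mono mult_right_mono)
  moreover have "real n * (3 / q * \<epsilon>) = 3 * (real n * \<epsilon> / q)" by simp
  ultimately show ?thesis using n by linarith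
qed

theorem lemma1:
  fixes k :: nat and lam :: "'a::euclidean_space measure" and q :: real
    and Qs :: "nat \<Rightarrow> nat \<Rightarrow> real" and fs :: "nat \<Rightarrow> 'a \<Rightarrow> real"
    and mu :: "nat \<Rightarrow> real"
    and pQ :: "(nat \<Rightarrow> nat \<Rightarrow> real) measure" and pf :: "(nat \<Rightarrow> 'a \<Rightarrow> real) measure"
    and \<epsilon>0 :: real and Th :: "real \<Rightarrow> 'a param set"
  assumes k: "k \<ge> 1"
    and lam: "sigma_finite_measure lam" "sets lam = sets borel"
    and q: "q > 0"
    and ts: "(Qs, fs) \<in> Theta_q k q lam"
    and mu: "distr_on k mu" "\<forall>i<k. q \<le> mu i"
    and prior: "prob_space pQ" "prob_space pf"
    and A1_eps0: "\<epsilon>0 > 0"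
    and A1_sub: "\<forall>\<epsilon>. 0 < \<epsilon> \<and> \<epsilon> < \<epsilon>0 \<longrightarrow> Th \<epsilon> \<subseteq> Theta_q k q lam"
    and A1_prior: "\<forall>\<epsilon>. 0 < \<epsilon> \<and> \<epsilon> < \<epsilon>0 \<longrightarrow>
                     Th \<epsilon> \<in> sets (pQ \<Otimes>\<^sub>M pf) \<and> emeasure (pQ \<Otimes>\<^sub>M pf) (Th \<epsilon>) > 0"
    and A1_conds: "\<forall>\<epsilon>. 0 < \<epsilon> \<and> \<epsilon> < \<epsilon>0 \<longrightarrow> (\<forall>\<theta>\<in>Th \<epsilon>. A1_conds k lam (Qs, fs) \<epsilon> \<theta>)"
  shows "\<forall>\<epsilon>. 0 < \<epsilon> \<and> \<epsilon> < 1 \<and> \<epsilon> < \<epsilon>0 \<longrightarrow>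
           (\<exists>N::nat. \<forall>n\<ge>N. \<forall>\<theta>\<in>Th \<epsilon>.
              ereal (1 / real n) *
                KL_dens (prod_ref lam n) (hmm_dens k n (stat_dist k Qs) (Qs, fs)) (hmm_dens k n mu \<theta>)
              \<le> ereal (3 / q * \<epsilon>))"
proof (intro allI impI)
  fix \<epsilon> :: real assume \<epsilon>: "0 < \<epsilon> \<and> \<epsilon> < 1 \<and> \<epsilon> < \<epsilon>0"
  have q_le_1: "q \<le> 1" using ts k unfolding Theta_q_def by (auto intro: Delta_q_le_1)
  show "\<exists>N::nat. \<forall>n\<ge>N. \<forall>\<theta>\<in>Th \<epsilon>. ereal (1 / real n) *
      KL_dens (prod_ref lam n) (hmm_dens k n (stat_dist k Qs) (Qs, fs)) (hmm_dens k n mu \<theta>)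
      \<le> ereal (3 / q * \<epsilon>)"
  proof (intro exI allI impI ballI)
    fix n \<theta> assume n: "nat \<lceil>ln (1/q) / \<epsilon>\<rceil> + 1 \<le> n" and \<theta>: "\<theta> \<in> Th \<epsilon>"
    obtain Q f where \<theta>_eq: "\<theta> = (Q, f)" by (cases \<theta>)
    have "ln (1/q) / \<epsilon> \<le> real (nat \<lceil>ln (1/q) / \<epsilon>\<rceil>)" by (rule real_nat_ceiling_ge)
    moreover have "real (nat \<lceil>ln (1/q) / \<epsilon>\<rceil>) \<le> real n" using n by linarith
    ultimately have rate: "ln (1/q) \<le> real n * \<epsilon>" using \<epsilon> by (simp add: divide_le_eq)
    have "(Q, f) \<in> Theta_q k q lam" "A1_conds k lam (Qs, fs) \<epsilon> (Q, f)"
      using A1_sub A1_conds \<epsilon> \<theta> unfolding \<theta>_eq by blast+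
    then interpret hmm_KL_bound k lam q \<epsilon> n Qs Q fs f mu
      using k lam(1) q ts mu(2) \<epsilon> n by (simp add: hmm_KL_bound_def)
    have "path_log_bound + real n * \<epsilon> \<le> real n * (3 / q * \<epsilon>)"
      unfolding path_log_bound_def using \<epsilon> by (intro KL_rate_arith[OF q q_le_1 _ rate]) simp
    then have "ereal (path_log_bound + real n * \<epsilon>) \<le> ereal (real n * (3 / q * \<epsilon>))" by simp
    with KL_dens_le have "KL_dens (prod_ref lam n) dens_s dens \<le> ereal (real n * (3 / q * \<epsilon>))"
      by (rule order_trans)
    then have "ereal (1 / real n) * KL_dens (prod_ref lam n) dens_s dens
        \<le> ereal (1 / real n) * ereal (real n * (3 / q * \<epsilon>))"
      by (rule ereal_mult_left_mono) simp
    with n show "ereal (1 / real n) * KL_dens (prod_ref lam n) dens_s (hmm_dens k n mu \<theta>)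
        \<le> ereal (3 / q * \<epsilon>)" unfolding \<theta>_eq by simp
  qed
qed

end
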